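(* For the qudit unitaries $I=\sum_{i=0}^{d-1}|i\rangle\langle i|$ and $V=|0\rangle\langle 0|-\sum_{i=1}^{d-1}|i\rangle\langle i|$, the corresponding unitary channels are perfectly distinguishable with an unentangled input state (e.g. $|+\rangle=(|0\rangle+|1\rangle)/\sqrt2$) for every $d$, whereas with a maximally entangled input state the optimal success probability $\tfrac12\big[1+\sqrt{1-(1-2/d)^2}\big]$ tends to $\tfrac12$ (random guessing) as $d\to\infty$.
   Context: Single-shot discrimination of two unitary channels $\rho\mapsto U\rho U^\dagger$ with uniform priors; an input state (possibly entangled with an ancilla) is prepared, one use of the unknown channel is applied, and an optimal measurement is performed. *)

theory Defs
  imports Complex_Main
begin

text \<open>The system is a qudit with basis
indices 0..<d; an ancilla with basis index set A is attached, so joint states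
are functions on {0..<d} \<times> A (vectors in C^d \<otimes> C^|A|).  Operators on a finite
index set S are kernels S \<Rightarrow> S \<Rightarrow> complex.\<close>

definition inner_on :: "'a set \<Rightarrow> ('a \<Rightarrow> complex) \<Rightarrow> ('a \<Rightarrow> complex) \<Rightarrow> complex" where
  "inner_on S u v = (\<Sum>x\<in>S. cnj (u x) * v x)"

definition op_apply :: "'a set \<Rightarrow> ('a \<Rightarrow> 'a \<Rightarrow> complex) \<Rightarrow> ('a \<Rightarrow> complex) \<Rightarrow> ('a \<Rightarrow> complex)" where
  "op_apply S E v = (\<lambda>x. \<Sum>y\<in>S. E x y * v y)"

definition is_state :: "'a set \<Rightarrow> ('a \<Rightarrow> complex) \<Rightarrow> bool" where
  "is_state S v \<longleftrightarrow> inner_on S v v = 1"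

text \<open>Effect operator: 0 \<le> E \<le> I (as quadratic forms on C^S, which over the
complex numbers includes Hermiticity).  A two-outcome POVM is {E, I - E}.\<close>
definition is_effect :: "'a set \<Rightarrow> ('a \<Rightarrow> 'a \<Rightarrow> complex) \<Rightarrow> bool" where
  "is_effect S E \<longleftrightarrow> (\<forall>v. inner_on S v (op_apply S E v) \<in> \<real>
      \<and> 0 \<le> Re (inner_on S v (op_apply S E v))
      \<and> Re (inner_on S v (op_apply S E v)) \<le> Re (inner_on S v v))"

definition id_op :: "'a \<Rightarrow> 'a \<Rightarrow> complex" where
  "id_op x y = (if x = y then 1 else 0)"

text \<open>Success probability (uniform priors) of guessing 0 on outcome E and 1 on
outcome I - E, when the two possible output states are psi0, psi1.\<close>
definition success_prob :: "'a set \<Rightarrow> ('a \<Rightarrow> complex) \<Rightarrow> ('a \<Rightarrow> complex)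
    \<Rightarrow> ('a \<Rightarrow> 'a \<Rightarrow> complex) \<Rightarrow> real" where
  "success_prob S psi0 psi1 E =
     1/2 * Re (inner_on S psi0 (op_apply S E psi0))
   + 1/2 * Re (inner_on S psi1 (op_apply S (\<lambda>x y. id_op x y - E x y) psi1))"

definition opt_success :: "'a set \<Rightarrow> ('a \<Rightarrow> complex) \<Rightarrow> ('a \<Rightarrow> complex) \<Rightarrow> real" where
  "opt_success S psi0 psi1 = (SUP E\<in>{E. is_effect S E}. success_prob S psi0 psi1 E)"

text \<open>(U \<otimes> I_anc) applied to a joint state on {0..<d} \<times> A.\<close>
definition apply_local :: "nat \<Rightarrow> (nat \<Rightarrow> nat \<Rightarrow> complex) \<Rightarrow> (nat \<times> 'b \<Rightarrow> complex)
    \<Rightarrow> (nat \<times> 'b \<Rightarrow> complex)" where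
  "apply_local d U psi = (\<lambda>(i, a). \<Sum>j\<in>{0..<d}. U i j * psi (j, a))"

definition channel_opt_success :: "nat \<Rightarrow> 'b set \<Rightarrow> (nat \<Rightarrow> nat \<Rightarrow> complex)
    \<Rightarrow> (nat \<Rightarrow> nat \<Rightarrow> complex) \<Rightarrow> (nat \<times> 'b \<Rightarrow> complex) \<Rightarrow> real" where
  "channel_opt_success d A U V psi =
     opt_success ({0..<d} \<times> A) (apply_local d U psi) (apply_local d V psi)"

definition qI :: "nat \<Rightarrow> nat \<Rightarrow> complex" where
  "qI i j = (if i = j then 1 else 0)"

definition qV :: "nat \<Rightarrow> nat \<Rightarrow> complex" where
  "qV i j = (if i = j then (if i = 0 then 1 else -1) else 0)"

text \<open>Unentangled input |+> \<otimes> |0>_anc (trivial one-dimensional ancilla).\<close>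
definition plus_state :: "nat \<times> nat \<Rightarrow> complex" where
  "plus_state = (\<lambda>(i, a). if a = 0 \<and> (i = 0 \<or> i = 1) then complex_of_real (1 / sqrt 2) else 0)"

definition max_ent :: "nat \<Rightarrow> nat \<times> nat \<Rightarrow> complex" where
  "max_ent d = (\<lambda>(i, a). if i = a \<and> i < d then complex_of_real (1 / sqrt (real d)) else 0)"

end

theory Submission
  imports Defs
begin

text \<open>For real p, m and any operator K the cross terms cancel in
  \<open>\<langle>e, K e\<rangle> - \<langle>f, K f\<rangle> = (p\<^sup>2 - m\<^sup>2) (\<langle>u, K u\<rangle> - \<langle>v, K v\<rangle>)\<close>, where e = p u + m v and
  f = m u + p v.  For unit vectors u, v with real overlap c, choosing p, m with e a unit vector
  and \<open>p\<^sup>2 - m\<^sup>2 = 1 / sqrt (1 - c\<^sup>2)\<close> shows that every effect succeeds with probability at most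
  the Helstrom value \<open>(1 + sqrt (1 - c\<^sup>2)) / 2\<close>, and the projector onto e attains it.  For the
  channels I and V with input psi the overlap is \<open>2 w\<^sub>0 - 1\<close>, where \<open>w\<^sub>0\<close> is the probability of
  finding the system in the basis state 0: \<open>w\<^sub>0 = 1/2\<close> for |+> (overlap 0, perfect
  discrimination) and \<open>w\<^sub>0 = 1/d\<close> for the maximally entangled state.\<close>

definition quad_form :: "'a set \<Rightarrow> ('a \<Rightarrow> 'a \<Rightarrow> complex) \<Rightarrow> ('a \<Rightarrow> complex) \<Rightarrow> complex" where
  "quad_form S K w = inner_on S w (op_apply S K w)"

definition rank_one_op :: "('a \<Rightarrow> complex) \<Rightarrow> 'a \<Rightarrow> 'a \<Rightarrow> complex" where
  "rank_one_op e = (\<lambda>x y. e x * cnj (e y))"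

definition helstrom_value :: "real \<Rightarrow> real" where
  "helstrom_value c = 1/2 * (1 + sqrt (1 - c\<^sup>2))"

lemma op_apply_linear:
  "op_apply S K (\<lambda>x. a * u x + b * v x) = (\<lambda>x. a * op_apply S K u x + b * op_apply S K v x)"
  unfolding op_apply_def by (auto simp: sum.distrib sum_distrib_left algebra_simps intro!: sum.cong)

lemma inner_on_linear_right:
  "inner_on S w (\<lambda>x. a * u x + b * v x) = a * inner_on S w u + b * inner_on S w v"
  unfolding inner_on_def by (auto simp: sum.distrib sum_distrib_left algebra_simps intro!: sum.cong)

lemma inner_on_linear_left:
  "inner_on S (\<lambda>x. a * u x + b * v x) w = cnj a * inner_on S u w + cnj b * inner_on S v w"
  unfolding inner_on_def by (auto simp: sum.distrib sum_distrib_left algebra_simps intro!: sum.cong)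

lemma inner_on_commute_cnj: "cnj (inner_on S u v) = inner_on S v u"
  unfolding inner_on_def by (simp add: mult.commute)

lemma inner_on_self_eq: "inner_on S w w = complex_of_real (\<Sum>x\<in>S. (cmod (w x))\<^sup>2)"
  unfolding inner_on_def of_real_sum by (simp add: complex_norm_square mult.commute del: of_real_power)

lemma inner_on_cong:
  "(\<And>x. x \<in> S \<Longrightarrow> u x = u' x) \<Longrightarrow> (\<And>x. x \<in> S \<Longrightarrow> v x = v' x) \<Longrightarrow> inner_on S u v = inner_on S u' v'"
  unfolding inner_on_def by (rule sum.cong) auto

lemma quad_form_combination:
  "quad_form S K (\<lambda>x. a * u x + b * v x)
     = cnj a * a * quad_form S K u + cnj a * b * inner_on S u (op_apply S K v)
     + cnj b * a * inner_on S v (op_apply S K u) + cnj b * b * quad_form S K v"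
  unfolding quad_form_def op_apply_linear inner_on_linear_left inner_on_linear_right
  by (simp add: algebra_simps)

lemma quad_form_swap_diff:
  fixes p m :: real and u v :: "'a \<Rightarrow> complex"
  shows "quad_form S K (\<lambda>x. p * u x + m * v x) - quad_form S K (\<lambda>x. m * u x + p * v x)
     = (p\<^sup>2 - m\<^sup>2) * (quad_form S K u - quad_form S K v)"
  unfolding quad_form_combination by (simp add: algebra_simps power2_eq_square)

lemma op_apply_diff:
  "op_apply S (\<lambda>x y. K x y - E x y) w = (\<lambda>x. op_apply S K w x - op_apply S E w x)"
  unfolding op_apply_def by (simp add: algebra_simps sum_subtractf)

lemma op_apply_id_op:
  assumes "finite S" "x \<in> S"
  shows "op_apply S id_op w x = w x"
proof -
  have "op_apply S id_op w x = (\<Sum>y\<in>S. if x = y then w y else 0)"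
    unfolding op_apply_def id_op_def by (intro sum.cong) auto
  then show ?thesis using assms by simp
qed

lemma success_prob_eq:
  assumes "finite S" and "inner_on S v v = 1"
  shows "success_prob S u v E = 1/2 + 1/2 * Re (quad_form S E u - quad_form S E v)"
proof -
  have "inner_on S v (op_apply S (\<lambda>x y. id_op x y - E x y) v) = inner_on S v (\<lambda>x. v x - op_apply S E v x)"
    using assms(1) by (intro inner_on_cong) (simp_all add: op_apply_diff op_apply_id_op)
  also have "\<dots> = 1 - quad_form S E v"
    using assms(2) unfolding inner_on_def quad_form_def by (simp add: algebra_simps sum_subtractf)
  finally have "Re (inner_on S v (op_apply S (\<lambda>x y. id_op x y - E x y) v)) = 1 - Re (quad_form S E v)"
    by simp
  then show ?thesis
    unfolding success_prob_def by (simp add: quad_form_def algebra_simps)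
qed

lemma cmod_inner_on_le:
  assumes "inner_on S e e = 1"
  shows "(cmod (inner_on S e w))\<^sup>2 \<le> Re (inner_on S w w)"
proof -
  define z where "z = inner_on S e w"
  have "0 \<le> Re (inner_on S (\<lambda>x. 1 * w x + (-z) * e x) (\<lambda>x. 1 * w x + (-z) * e x))"
    unfolding inner_on_self_eq by (simp add: sum_nonneg)
  also have "inner_on S (\<lambda>x. 1 * w x + (-z) * e x) (\<lambda>x. 1 * w x + (-z) * e x) = inner_on S w w - z * cnj z"
    unfolding inner_on_linear_left inner_on_linear_right assms z_def
    by (simp add: inner_on_commute_cnj[of S w e, symmetric] algebra_simps)
  finally show ?thesis
    unfolding z_def by (simp add: complex_norm_square[symmetric] del: of_real_power)
qed

lemma real_overlap_square_le_1:
  assumes "inner_on S u u = 1" "inner_on S v v = 1" "inner_on S u v = complex_of_real c"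
  shows "c\<^sup>2 \<le> 1"
  using cmod_inner_on_le[OF assms(1), of v] assms(2,3) by simp

lemma quad_form_rank_one_op:
  "quad_form S (rank_one_op e) w = complex_of_real ((cmod (inner_on S e w))\<^sup>2)"
proof -
  have "op_apply S (rank_one_op e) w = (\<lambda>x. e x * inner_on S e w)"
    unfolding op_apply_def inner_on_def rank_one_op_def
    by (auto simp: sum_distrib_left algebra_simps intro!: sum.cong)
  then have "quad_form S (rank_one_op e) w = inner_on S w e * inner_on S e w"
    unfolding quad_form_def inner_on_def by (simp add: sum_distrib_right mult.assoc)
  also have "\<dots> = complex_of_real ((cmod (inner_on S e w))\<^sup>2)"
    by (simp add: complex_norm_square inner_on_commute_cnj[of S e w, symmetric] mult.commute del: of_real_power)
  finally show ?thesis .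
qed

lemma is_effect_rank_one_op:
  assumes "inner_on S e e = 1"
  shows "is_effect S (rank_one_op e)"
  unfolding is_effect_def quad_form_rank_one_op[unfolded quad_form_def]
  using cmod_inner_on_le[OF assms] by simp

lemma helstrom_coefficients:
  fixes c :: real
  assumes "-1 < c" "c < 1"
  obtains p m :: real where "p\<^sup>2 + m\<^sup>2 + 2 * p * m * c = 1" and "(p\<^sup>2 - m\<^sup>2) * sqrt (1 - c\<^sup>2) = 1"
proof
  define a where "a = 1 / (2 * sqrt (1 + c))"
  define b where "b = 1 / (2 * sqrt (1 - c))"
  have a2: "a\<^sup>2 * (1 + c) = 1/4" and b2: "b\<^sup>2 * (1 - c) = 1/4"
    using assms by (simp_all add: a_def b_def power_divide power_mult_distrib)
  have "sqrt (1 - c\<^sup>2) = sqrt (1 + c) * sqrt (1 - c)"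
    by (simp add: real_sqrt_mult[symmetric] algebra_simps power2_eq_square)
  then have ab: "4 * a * b * sqrt (1 - c\<^sup>2) = 1"
    using assms by (simp add: a_def b_def)
  show "(a + b)\<^sup>2 + (a - b)\<^sup>2 + 2 * (a + b) * (a - b) * c = 1"
  proof -
    have "(a + b)\<^sup>2 + (a - b)\<^sup>2 + 2 * (a + b) * (a - b) * c = 2 * (a\<^sup>2 * (1 + c)) + 2 * (b\<^sup>2 * (1 - c))"
      by (simp add: algebra_simps power2_eq_square)
    then show ?thesis using a2 b2 by simp
  qed
  show "((a + b)\<^sup>2 - (a - b)\<^sup>2) * sqrt (1 - c\<^sup>2) = 1"
    using ab by (simp add: algebra_simps power2_eq_square)
qed

lemma inner_on_combination_self:
  fixes p m c :: real and u v :: "'a \<Rightarrow> complex"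
  assumes "inner_on S u u = 1" "inner_on S v v = 1" "inner_on S u v = complex_of_real c"
  shows "inner_on S (\<lambda>x. p * u x + m * v x) (\<lambda>x. p * u x + m * v x)
    = complex_of_real (p\<^sup>2 + m\<^sup>2 + 2 * p * m * c)"
  using assms inner_on_commute_cnj[of S u v]
  unfolding inner_on_linear_left inner_on_linear_right by (simp add: algebra_simps power2_eq_square)

lemma success_prob_le_helstrom_value:
  fixes p m c :: real and u v :: "'a \<Rightarrow> complex"
  assumes S: "finite S" and E: "is_effect S E"
    and u: "inner_on S u u = 1" and v: "inner_on S v v = 1" and uv: "inner_on S u v = complex_of_real c"
    and unit: "p\<^sup>2 + m\<^sup>2 + 2 * p * m * c = 1" and scale: "(p\<^sup>2 - m\<^sup>2) * sqrt (1 - c\<^sup>2) = 1"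
  shows "success_prob S u v E \<le> helstrom_value c"
proof -
  define e where "e = (\<lambda>x. p * u x + m * v x)"
  define f where "f = (\<lambda>x. m * u x + p * v x)"
  have ee: "inner_on S e e = 1"
    unfolding e_def inner_on_combination_self[OF u v uv] unit by simp
  have "c\<^sup>2 \<le> 1" \<comment> \<open>so that \<open>sqrt (1 - c\<^sup>2)\<close> is not the negative junk value\<close>
    by (rule real_overlap_square_le_1[OF u v uv])
  have pos: "p\<^sup>2 - m\<^sup>2 > 0"
  proof (rule ccontr)
    assume "\<not> p\<^sup>2 - m\<^sup>2 > 0"
    then have "(p\<^sup>2 - m\<^sup>2) * sqrt (1 - c\<^sup>2) \<le> 0"
      using \<open>c\<^sup>2 \<le> 1\<close> by (simp add: mult_nonpos_nonneg)
    with scale show False by simp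
  qed
  have "(p\<^sup>2 - m\<^sup>2) * Re (quad_form S E u - quad_form S E v) = Re (quad_form S E e - quad_form S E f)"
    unfolding e_def f_def quad_form_swap_diff by simp
  also have "\<dots> \<le> Re (quad_form S E e)"
    using E unfolding is_effect_def quad_form_def by simp
  also have "\<dots> \<le> Re (inner_on S e e)"
    using E unfolding is_effect_def quad_form_def by blast
  also have "\<dots> = 1"
    using ee by simp
  finally have "Re (quad_form S E u - quad_form S E v) \<le> 1 / (p\<^sup>2 - m\<^sup>2)"
    using pos by (simp add: pos_le_divide_eq mult.commute)
  also have "\<dots> = sqrt (1 - c\<^sup>2)"
    using scale pos by (simp add: field_simps)
  finally show ?thesis
    unfolding success_prob_eq[OF S v] helstrom_value_def by simp
qed

lemma helstrom_measurement:
  fixes p m c :: real and u v :: "'a \<Rightarrow> complex"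
  assumes S: "finite S"
    and u: "inner_on S u u = 1" and v: "inner_on S v v = 1" and uv: "inner_on S u v = complex_of_real c"
    and unit: "p\<^sup>2 + m\<^sup>2 + 2 * p * m * c = 1" and scale: "(p\<^sup>2 - m\<^sup>2) * sqrt (1 - c\<^sup>2) = 1"
  defines "e \<equiv> \<lambda>x. p * u x + m * v x"
  shows "is_effect S (rank_one_op e)" and "success_prob S u v (rank_one_op e) = helstrom_value c"
proof -
  show "is_effect S (rank_one_op e)"
    by (rule is_effect_rank_one_op) (simp add: e_def inner_on_combination_self[OF u v uv] unit)
  have vu: "inner_on S v u = complex_of_real c"
    using inner_on_commute_cnj[of S u v] uv by simp
  have eu: "inner_on S e u = complex_of_real (p + m * c)"
    unfolding e_def inner_on_linear_left u vu by simp
  have ev: "inner_on S e v = complex_of_real (p * c + m)"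
    unfolding e_def inner_on_linear_left v uv by simp
  have "c\<^sup>2 \<le> 1"
    by (rule real_overlap_square_le_1[OF u v uv])
  have "(p + m * c)\<^sup>2 - (p * c + m)\<^sup>2 = (p\<^sup>2 - m\<^sup>2) * (sqrt (1 - c\<^sup>2))\<^sup>2"
    using \<open>c\<^sup>2 \<le> 1\<close> by (simp add: algebra_simps power2_eq_square)
  also have "\<dots> = ((p\<^sup>2 - m\<^sup>2) * sqrt (1 - c\<^sup>2)) * sqrt (1 - c\<^sup>2)"
    by (simp only: power2_eq_square mult.assoc)
  also have "\<dots> = sqrt (1 - c\<^sup>2)"
    using scale by simp
  finally show "success_prob S u v (rank_one_op e) = helstrom_value c"
    unfolding success_prob_eq[OF S v] quad_form_rank_one_op eu ev norm_of_real power2_abs helstrom_value_def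
    by simp
qed

lemma opt_success_eq_helstrom_value:
  fixes c :: real and u v :: "'a \<Rightarrow> complex"
  assumes S: "finite S"
    and u: "inner_on S u u = 1" and v: "inner_on S v v = 1" and uv: "inner_on S u v = complex_of_real c"
    and c: "-1 < c" "c < 1"
  shows "opt_success S u v = helstrom_value c"
proof -
  obtain p m where unit: "p\<^sup>2 + m\<^sup>2 + 2 * p * m * c = 1" and scale: "(p\<^sup>2 - m\<^sup>2) * sqrt (1 - c\<^sup>2) = 1"
    using helstrom_coefficients[OF c] .
  note optimal = helstrom_measurement[OF S u v uv unit scale]
  show ?thesis
    unfolding opt_success_def
  proof (rule cSup_eq_maximum)
    show "helstrom_value c \<in> success_prob S u v ` {E. is_effect S E}"
      using optimal by (intro image_eqI[of _ _ "rank_one_op (\<lambda>x. p * u x + m * v x)"]) auto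
    show "x \<le> helstrom_value c" if "x \<in> success_prob S u v ` {E. is_effect S E}" for x
      using that success_prob_le_helstrom_value[OF S _ u v uv unit scale] by auto
  qed
qed

definition marginal_prob :: "'b set \<Rightarrow> (nat \<times> 'b \<Rightarrow> complex) \<Rightarrow> nat \<Rightarrow> real" where
  "marginal_prob A psi i = (\<Sum>a\<in>A. (cmod (psi (i, a)))\<^sup>2)"

lemma inner_on_product_self:
  "inner_on ({0..<d} \<times> A) psi psi = complex_of_real (\<Sum>i\<in>{0..<d}. marginal_prob A psi i)"
  unfolding inner_on_self_eq marginal_prob_def sum.cartesian_product by simp

lemma apply_local_diagonal:
  assumes "i < d"
  shows "apply_local d (\<lambda>i j. if i = j then g i else 0) psi (i, a) = g i * psi (i, a)"
proof -
  have "apply_local d (\<lambda>i j. if i = j then g i else 0) psi (i, a)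
      = (\<Sum>j\<in>{0..<d}. if i = j then g i * psi (j, a) else 0)"
    unfolding apply_local_def case_prod_conv by (intro sum.cong) auto
  then show ?thesis using assms by simp
qed

lemma apply_local_qI: "i < d \<Longrightarrow> apply_local d qI psi (i, a) = psi (i, a)"
  using apply_local_diagonal[of i d "\<lambda>_. 1"] unfolding qI_def by simp

lemma apply_local_qV: "i < d \<Longrightarrow> apply_local d qV psi (i, a) = (if i = 0 then 1 else -1) * psi (i, a)"
  unfolding qV_def by (rule apply_local_diagonal)

lemma inner_on_apply_local_qI:
  "inner_on ({0..<d} \<times> A) (apply_local d qI psi) (apply_local d qI psi) = inner_on ({0..<d} \<times> A) psi psi"
  by (rule inner_on_cong) (auto simp: apply_local_qI)

lemma inner_on_apply_local_qV:
  "inner_on ({0..<d} \<times> A) (apply_local d qV psi) (apply_local d qV psi) = inner_on ({0..<d} \<times> A) psi psi"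
  unfolding inner_on_self_eq by (intro arg_cong[where f = complex_of_real] sum.cong) (auto simp: apply_local_qV)

lemma inner_on_apply_local_qI_qV:
  assumes "0 < d"
  shows "inner_on ({0..<d} \<times> A) (apply_local d qI psi) (apply_local d qV psi)
    = complex_of_real (2 * marginal_prob A psi 0 - (\<Sum>i\<in>{0..<d}. marginal_prob A psi i))"
proof -
  have "inner_on ({0..<d} \<times> A) (apply_local d qI psi) (apply_local d qV psi)
      = (\<Sum>(i, a)\<in>{0..<d} \<times> A. complex_of_real ((if i = 0 then 1 else -1) * (cmod (psi (i, a)))\<^sup>2))"
    unfolding inner_on_def
    by (intro sum.cong) (auto simp: apply_local_qI apply_local_qV complex_mult_cnj cmod_power2 mult.commute)
  also have "\<dots> = complex_of_real (\<Sum>i\<in>{0..<d}. (if i = 0 then 1 else -1) * marginal_prob A psi i)"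
    unfolding marginal_prob_def sum.cartesian_product[symmetric] of_real_sum sum_distrib_left by simp
  also have "(\<Sum>i\<in>{0..<d}. (if i = 0 then 1 else -1) * marginal_prob A psi i)
      = 2 * marginal_prob A psi 0 - (\<Sum>i\<in>{0..<d}. marginal_prob A psi i)"
    using assms by (simp add: sum.atLeast_Suc_lessThan sum_negf)
  finally show ?thesis .
qed

lemma channel_opt_success_qI_qV:
  assumes "finite A" and state: "is_state ({0..<d} \<times> A) psi"
    and "0 < marginal_prob A psi 0" "marginal_prob A psi 0 < 1"
  shows "channel_opt_success d A qI qV psi = helstrom_value (2 * marginal_prob A psi 0 - 1)"
proof -
  have total: "(\<Sum>i\<in>{0..<d}. marginal_prob A psi i) = 1"
    using state unfolding is_state_def inner_on_product_self of_real_eq_1_iff .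
  have "0 < d"
    using total by (cases d) auto
  show ?thesis
    unfolding channel_opt_success_def
  proof (rule opt_success_eq_helstrom_value)
    show "inner_on ({0..<d} \<times> A) (apply_local d qI psi) (apply_local d qV psi)
        = complex_of_real (2 * marginal_prob A psi 0 - 1)"
      unfolding inner_on_apply_local_qI_qV[OF \<open>0 < d\<close>] total ..
  qed (use assms in \<open>simp_all add: is_state_def inner_on_apply_local_qI inner_on_apply_local_qV\<close>)
qed

lemma marginal_prob_plus_state: "marginal_prob {0} plus_state i = (if i = 0 \<or> i = 1 then 1/2 else 0)"
  unfolding marginal_prob_def plus_state_def by (simp add: norm_divide power_divide)

lemma sum_marginal_prob_plus_state:
  assumes "2 \<le> d"
  shows "(\<Sum>i\<in>{0..<d}. marginal_prob {0} plus_state i) = 1"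
proof -
  have "{0..<d} \<inter> {i. i = 0 \<or> i = 1} = {0, 1}"
    using assms by auto
  then show ?thesis
    unfolding marginal_prob_plus_state sum.If_cases[OF finite_atLeastLessThan] by simp
qed

lemma marginal_prob_max_ent:
  assumes "i < d"
  shows "marginal_prob {0..<d} (max_ent d) i = 1 / real d"
proof -
  have "marginal_prob {0..<d} (max_ent d) i = (\<Sum>a\<in>{0..<d}. if i = a then 1 / real d else 0)"
    unfolding marginal_prob_def max_ent_def using assms by (intro sum.cong) (auto simp: norm_divide power_divide)
  then show ?thesis
    using assms by simp
qed

lemma is_state_plus_state: "2 \<le> d \<Longrightarrow> is_state ({0..<d} \<times> {0}) plus_state"
  unfolding is_state_def inner_on_product_self sum_marginal_prob_plus_state by simp

lemma channel_opt_success_plus_state: "2 \<le> d \<Longrightarrow> channel_opt_success d {0} qI qV plus_state = 1"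
  by (simp add: channel_opt_success_qI_qV is_state_plus_state marginal_prob_plus_state helstrom_value_def)

lemma is_state_max_ent: "0 < d \<Longrightarrow> is_state ({0..<d} \<times> {0..<d}) (max_ent d)"
  unfolding is_state_def inner_on_product_self by (simp add: marginal_prob_max_ent)

lemma channel_opt_success_max_ent:
  assumes "2 \<le> d"
  shows "channel_opt_success d {0..<d} qI qV (max_ent d) = 1/2 * (1 + sqrt (1 - (1 - 2 / real d)\<^sup>2))"
proof -
  have "(2 * (1 / real d) - 1)\<^sup>2 = (1 - 2 / real d)\<^sup>2"
    by (simp add: power2_commute)
  then show ?thesis
    using assms by (simp add: channel_opt_success_qI_qV is_state_max_ent marginal_prob_max_ent helstrom_value_def)
qed

theorem mainTheorem12:
  shows "(\<forall>d::nat. d \<ge> 2 \<longrightarrow>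
            is_state ({0..<d} \<times> {0::nat}) plus_state
          \<and> channel_opt_success d {0::nat} qI qV plus_state = 1
          \<and> is_state ({0..<d} \<times> {0..<d}) (max_ent d)
          \<and> channel_opt_success d {0..<d} qI qV (max_ent d)
              = 1/2 * (1 + sqrt (1 - (1 - 2 / real d)^2)))
       \<and> (\<lambda>d. channel_opt_success d {0..<d} qI qV (max_ent d)) \<longlonglongrightarrow> 1/2"
proof (intro conjI allI impI)
  fix d :: nat
  assume "d \<ge> 2"
  then show "is_state ({0..<d} \<times> {0::nat}) plus_state"
    and "channel_opt_success d {0::nat} qI qV plus_state = 1"
    and "is_state ({0..<d} \<times> {0..<d}) (max_ent d)"
    and "channel_opt_success d {0..<d} qI qV (max_ent d) = 1/2 * (1 + sqrt (1 - (1 - 2 / real d)^2))"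
    by (simp_all add: is_state_plus_state channel_opt_success_plus_state is_state_max_ent
        channel_opt_success_max_ent)
next
  have "(\<lambda>d. 1/2 * (1 + sqrt (1 - (1 - 2 / real d)\<^sup>2))) \<longlonglongrightarrow> 1/2 * (1 + sqrt (1 - (1 - 0)\<^sup>2))"
    by (intro tendsto_intros lim_const_over_n)
  then have "(\<lambda>d. 1/2 * (1 + sqrt (1 - (1 - 2 / real d)\<^sup>2))) \<longlonglongrightarrow> 1/2"
    by simp
  moreover have "\<forall>\<^sub>F d in sequentially.
      1/2 * (1 + sqrt (1 - (1 - 2 / real d)\<^sup>2)) = channel_opt_success d {0..<d} qI qV (max_ent d)"
    using eventually_ge_at_top[of 2] by eventually_elim (simp add: channel_opt_success_max_ent)
  ultimately show "(\<lambda>d. channel_opt_success d {0..<d} qI qV (max_ent d)) \<longlonglongrightarrow> 1/2"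
    by (rule Lim_transform_eventually)
qed

end
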